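(* (a) For every integer $n\ge 2$, $\chi(H_2(n,2))=2^{n-1}$. (b) Let $q\ge 3$ and $n\ge 2$ be integers and let $d$ be an integer with $d>0$ and $d\in\{n-q+2,\ldots,n\}$. Then $\chi(H_q(n,d))=q^{n-d+1}$, and every proper $q^{n-d+1}$-coloring of $H_q(n,d)$ is even.
   Context: $\mathbb{Z}_q=\mathbb{Z}/q\mathbb{Z}$; for $x,y\in\mathbb{Z}_q^n$, $\mathrm{d}(x,y)=|\{i: x_i\neq y_i\}|$ is the Hamming distance. $H_q(n,d)$ is the simple undirected graph with vertex set $\mathbb{Z}_q^n$ in which $x,y$ are adjacent iff $\mathrm{d}(x,y)\ge d$. $\chi$ denotes the chromatic number. A coloring is called even if all its color classes (sets of vertices with the same color) have the same cardinality. *)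

theory Defs
  imports Main
begin

text \<open>Vertices of H_q(n,d): words of length n over Z_q, represented as functions
  nat => nat with values < q on positions < n and 0 elsewhere.\<close>
definition words :: "nat \<Rightarrow> nat \<Rightarrow> (nat \<Rightarrow> nat) set" where
  "words q n = {x. (\<forall>i<n. x i < q) \<and> (\<forall>i\<ge>n. x i = 0)}"

definition hdist :: "nat \<Rightarrow> (nat \<Rightarrow> nat) \<Rightarrow> (nat \<Rightarrow> nat) \<Rightarrow> nat" where
  "hdist n x y = card {i. i < n \<and> x i \<noteq> y i}"

definition H_adj :: "nat \<Rightarrow> nat \<Rightarrow> nat \<Rightarrow> (nat \<Rightarrow> nat) \<Rightarrow> (nat \<Rightarrow> nat) \<Rightarrow> bool" where
  "H_adj q n d x y \<longleftrightarrow> x \<in> words q n \<and> y \<in> words q n \<and> x \<noteq> y \<and> hdist n x y \<ge> d"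

definition proper_coloring :: "'a set \<Rightarrow> ('a \<Rightarrow> 'a \<Rightarrow> bool) \<Rightarrow> nat \<Rightarrow> ('a \<Rightarrow> nat) \<Rightarrow> bool" where
  "proper_coloring V adj k c \<longleftrightarrow>
     (\<forall>v\<in>V. c v < k) \<and> (\<forall>u\<in>V. \<forall>v\<in>V. adj u v \<longrightarrow> c u \<noteq> c v)"

definition chromatic_number :: "'a set \<Rightarrow> ('a \<Rightarrow> 'a \<Rightarrow> bool) \<Rightarrow> nat" where
  "chromatic_number V adj = (LEAST k. \<exists>c. proper_coloring V adj k c)"

definition even_coloring :: "'a set \<Rightarrow> ('a \<Rightarrow> nat) \<Rightarrow> bool" where
  "even_coloring V c \<longleftrightarrow>
     (\<forall>u\<in>V. \<forall>v\<in>V. card {w\<in>V. c w = c u} = card {w\<in>V. c w = c v})"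

end

theory Submission
  imports Defs "HOL-Computational_Algebra.Polynomial"
begin

(*
  Colouring a word by its first t = n - d + 1 letters is proper, so q ^ t colours suffice.
  Conversely a colour class consists of words that pairwise agree in at least t positions, and
  for t < q such a family has at most q ^ (n - t) members; as q ^ n = q ^ t * q ^ (n - t), any
  proper colouring needs q ^ t colours, and with exactly q ^ t colours every class is extremal.

  The family bound is Delsarte's linear programming bound.  For a family F let P(w) be the sum
  over x, y in F of the product over the coordinates of (q - 1) (1 + w) where x and y agree and
  q - 1 - w where they differ.  Coordinatewise this kernel is positive semidefinite, so P has
  nonnegative coefficients; moreover P(0) = (q - 1) ^ n |F| ^ 2, P(q - 1) = (q (q - 1)) ^ n |F|,
  and (1 + w) ^ t divides P.  A linear functional that is nonnegative on every power of w
  (this needs t < q), equals q ^ t on 1 and agrees with evaluation at q - 1 on multiples of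
  (1 + w) ^ t then gives q ^ t P(0) <= P(q - 1).

  For q = 2 and d = 2 the classes have at most two elements: the Hamming distance of binary
  words has the parity of the sum of their weights, so three distinct words cannot be pairwise
  at distance one.
*)

lemma words_Suc_eq_image:
  "words q (Suc n) = (\<lambda>(y, a). y(n := a)) ` (words q n \<times> {..<q})"
proof
  show "words q (Suc n) \<subseteq> (\<lambda>(y, a). y(n := a)) ` (words q n \<times> {..<q})"
  proof
    fix x assume x: "x \<in> words q (Suc n)"
    then have "x(n := 0) \<in> words q n" "x n < q" by (auto simp: words_def)
    moreover have "x = (x(n := 0))(n := x n)" by simp
    ultimately show "x \<in> (\<lambda>(y, a). y(n := a)) ` (words q n \<times> {..<q})"
      by (intro rev_image_eqI[of "(x(n := 0), x n)"]) auto
  qed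
qed (auto simp: words_def)

lemma inj_on_words_extend: "inj_on (\<lambda>(y, a). y(n := a)) (words q n \<times> {..<q})"
proof (rule inj_onI, clarify)
  fix y a y' a' assume y: "y \<in> words q n" "y' \<in> words q n" and eq: "y(n := a) = y'(n := a')"
  have "y i = y' i" for i
  proof (cases "i = n")
    case False then show ?thesis using fun_cong[OF eq, of i] by simp
  qed (use y in \<open>simp add: words_def\<close>)
  then show "y = y' \<and> a = a'" using fun_cong[OF eq, of n] by auto
qed

lemma words_0: "words q 0 = {\<lambda>_. 0}"
  by (auto simp: words_def)

lemma finite_words [simp]: "finite (words q n)"
  by (induction n) (simp_all add: words_0 words_Suc_eq_image)

lemma card_words: "card (words q n) = q ^ n"
proof (induction n)
  case (Suc n)
  have "card (words q (Suc n)) = card (words q n \<times> {..<q})"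
    unfolding words_Suc_eq_image by (rule card_image[OF inj_on_words_extend])
  with Suc show ?case by (simp add: card_cartesian_product)
qed (simp add: words_0)

lemma sum_words_Suc:
  "(\<Sum>x\<in>words q (Suc n). g x) = (\<Sum>a<q. \<Sum>y\<in>words q n. g (y(n := a)))"
proof -
  have "(\<Sum>x\<in>words q (Suc n). g x) = (\<Sum>(y, a)\<in>words q n \<times> {..<q}. g (y(n := a)))"
    unfolding words_Suc_eq_image
    by (subst sum.reindex[OF inj_on_words_extend]) (simp add: case_prod_unfold)
  also have "\<dots> = (\<Sum>a<q. \<Sum>y\<in>words q n. g (y(n := a)))"
    by (simp add: sum.cartesian_product[symmetric] sum.swap[of _ "words q n"])
  finally show ?thesis .
qed

lemma words_eqI:
  assumes "x \<in> words q n" "y \<in> words q n" "\<forall>i<n. x i = y i"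
  shows "x = y"
  using assms by (auto simp: words_def intro!: ext) (metis not_le)

lemma hdist_self [simp]: "hdist n x x = 0"
  by (simp add: hdist_def)

lemma card_agree_add_hdist: "card {i. i < n \<and> x i = y i} + hdist n x y = n"
proof -
  have "{i. i < n \<and> x i = y i} \<union> {i. i < n \<and> x i \<noteq> y i} = {..<n}" by auto
  then have "card {i. i < n \<and> x i = y i} + card {i. i < n \<and> x i \<noteq> y i} = card {..<n}"
    by (subst card_Un_disjoint[symmetric]) auto
  then show ?thesis by (simp add: hdist_def)
qed

definition hamming_kernel :: "nat \<Rightarrow> nat \<Rightarrow> (nat \<Rightarrow> nat) \<Rightarrow> (nat \<Rightarrow> nat) \<Rightarrow> real poly" where
  "hamming_kernel q n x y =
     (\<Prod>i<n. if x i = y i then [:real q - 1, real q - 1:] else [:real q - 1, -1:])"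

definition kernel_sum :: "nat \<Rightarrow> nat \<Rightarrow> ((nat \<Rightarrow> nat) \<Rightarrow> (nat \<Rightarrow> nat) \<Rightarrow> real) \<Rightarrow> real poly" where
  "kernel_sum q n c = (\<Sum>x\<in>words q n. \<Sum>y\<in>words q n. smult (c x y) (hamming_kernel q n x y))"

lemma hamming_kernel_Suc:
  "hamming_kernel q (Suc n) (x(n := a)) (y(n := b)) =
     hamming_kernel q n x y * (if a = b then [:real q - 1, real q - 1:] else [:real q - 1, -1:])"
  unfolding hamming_kernel_def by (simp add: prod.lessThan_Suc)

lemma poly_hamming_kernel_0: "poly (hamming_kernel q n x y) 0 = (real q - 1) ^ n"
proof -
  have "poly (if x i = y i then [:real q - 1, real q - 1:] else [:real q - 1, -1:]) 0 = real q - 1"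
    for i
    by simp
  then show ?thesis
    unfolding hamming_kernel_def poly_prod by simp
qed

lemma poly_hamming_kernel_q_minus_1:
  assumes "x \<in> words q n" "y \<in> words q n"
  shows "poly (hamming_kernel q n x y) (real q - 1) =
           (if x = y then (real q * (real q - 1)) ^ n else 0)"
proof -
  have "poly (hamming_kernel q n x y) (real q - 1) =
      (\<Prod>i<n. if x i = y i then real q * (real q - 1) else 0)"
    unfolding hamming_kernel_def poly_prod
    by (intro prod.cong refl) (simp add: algebra_simps)
  also have "\<dots> = (if x = y then (real q * (real q - 1)) ^ n else 0)"
    using words_eqI[OF assms] by auto
  finally show ?thesis .
qed

lemma hamming_kernel_dvd:
  assumes "t + hdist n x y \<le> n"
  shows "[:1, 1:] ^ t dvd hamming_kernel q n x y"
proof -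
  define m where "m = card {i. i < n \<and> x i = y i}"
  have "t \<le> m" using assms card_agree_add_hdist[of n x y] by (simp add: m_def)
  have "{..<n} \<inter> {i. x i = y i} = {i. i < n \<and> x i = y i}" by auto
  then have "hamming_kernel q n x y = smult ((real q - 1) ^ m) ([:1, 1:] ^ m) *
      (\<Prod>i\<in>{..<n} \<inter> - {i. x i = y i}. [:real q - 1, -1:])"
    unfolding hamming_kernel_def prod.If_cases[OF finite_lessThan] m_def
    by (simp add: smult_power[symmetric])
  moreover have "[:1, 1:] ^ t dvd smult ((real q - 1) ^ m) ([:1, 1:] ^ m)"
    using \<open>t \<le> m\<close> by (intro dvd_smult le_imp_power_dvd)
  ultimately show ?thesis by (metis dvd_mult2)
qed

lemma smult_sum_right: "smult c (\<Sum>x\<in>A. p x) = (\<Sum>x\<in>A. smult c (p x))"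
  by (induction A rule: infinite_finite_induct) (simp_all add: smult_add_right)

lemma kernel_sum_sum: "(\<Sum>a\<in>A. kernel_sum q n (c a)) = kernel_sum q n (\<lambda>x y. \<Sum>a\<in>A. c a x y)"
  unfolding kernel_sum_def smult_sum by (simp add: sum.swap[of _ A])

lemma kernel_sum_add: "kernel_sum q n (\<lambda>x y. c x y + c' x y) = kernel_sum q n c + kernel_sum q n c'"
  unfolding kernel_sum_def by (simp add: smult_add_left sum.distrib)

lemma kernel_sum_smult: "kernel_sum q n (\<lambda>x y. r * c x y) = smult r (kernel_sum q n c)"
  unfolding kernel_sum_def by (simp add: smult_sum_right)

lemma kernel_sum_indicator:
  assumes "F \<subseteq> words q n"
  shows "kernel_sum q n (\<lambda>x y. (if x \<in> F then 1 else 0) * (if y \<in> F then 1 else 0)) =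
           (\<Sum>x\<in>F. \<Sum>y\<in>F. hamming_kernel q n x y)"
proof -
  have "kernel_sum q n (\<lambda>x y. (if x \<in> F then 1 else 0) * (if y \<in> F then 1 else 0)) =
      (\<Sum>x\<in>words q n. if x \<in> F
         then (\<Sum>y\<in>words q n. if y \<in> F then hamming_kernel q n x y else 0) else 0)"
    unfolding kernel_sum_def by (intro sum.cong refl) (auto intro!: sum.cong)
  also have "\<dots> = (\<Sum>x\<in>F. \<Sum>y\<in>F. hamming_kernel q n x y)"
    using assms by (simp add: sum.inter_restrict[OF finite_words, symmetric] Int_absorb1)
  finally show ?thesis .
qed

lemma kernel_sum_Suc:
  "kernel_sum q (Suc n) c =
     (\<Sum>a<q. \<Sum>b<q. kernel_sum q n (\<lambda>x y. c (x(n := a)) (y(n := b))) *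
        (if a = b then [:real q - 1, real q - 1:] else [:real q - 1, -1:]))"
  (is "_ = (\<Sum>a<q. \<Sum>b<q. _ * ?k a b)")
proof -
  have "kernel_sum q (Suc n) c = (\<Sum>a<q. \<Sum>x\<in>words q n. \<Sum>b<q. \<Sum>y\<in>words q n.
      smult (c (x(n := a)) (y(n := b))) (hamming_kernel q n x y) * ?k a b)"
    unfolding kernel_sum_def sum_words_Suc hamming_kernel_Suc by (simp add: mult_smult_left)
  also have "\<dots> = (\<Sum>a<q. \<Sum>b<q. \<Sum>x\<in>words q n. \<Sum>y\<in>words q n.
      smult (c (x(n := a)) (y(n := b))) (hamming_kernel q n x y) * ?k a b)"
    by (intro sum.cong refl) (rule sum.swap)
  also have "\<dots> = (\<Sum>a<q. \<Sum>b<q. kernel_sum q n (\<lambda>x y. c (x(n := a)) (y(n := b))) * ?k a b)"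
    unfolding kernel_sum_def by (simp add: sum_distrib_right)
  finally show ?thesis .
qed

lemma sum_products_centered:
  fixes u v :: "nat \<Rightarrow> real"
  assumes "q > 0"
  shows "(\<Sum>a<q. u a * v a) = (\<Sum>a<q. u a) * (\<Sum>a<q. v a) / real q
           + (\<Sum>a<q. (u a - (\<Sum>b<q. u b) / real q) * (v a - (\<Sum>b<q. v b) / real q))"
proof -
  define U V where "U = (\<Sum>b<q. u b)" and "V = (\<Sum>b<q. v b)"
  have "(\<Sum>a<q. (u a - U / q) * (v a - V / q)) = (\<Sum>a<q. u a * v a)
      - (\<Sum>a<q. u a) * V / q - U * (\<Sum>a<q. v a) / q + q * (U * V / (q * q))"
    by (simp add: algebra_simps sum.distrib sum_subtractf sum_distrib_left sum_distrib_right
        sum_divide_distrib)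
  moreover have "q * (U * V / (q * q)) = U * V / q"
    using assms by simp
  ultimately show ?thesis
    unfolding U_def[symmetric] V_def[symmetric] by linarith
qed

lemma sum_mult_diagonal_split:
  fixes K :: "'a \<Rightarrow> 'a \<Rightarrow> 'b::comm_ring_1"
  assumes "finite A"
  shows "(\<Sum>a\<in>A. \<Sum>b\<in>A. K a b * (if a = b then B + C else B)) =
           (\<Sum>a\<in>A. \<Sum>b\<in>A. K a b) * B + (\<Sum>a\<in>A. K a a) * C"
proof -
  have "K a b * (if a = b then B + C else B) = K a b * B + (if a = b then K a b * C else 0)" for a b
    by (simp add: distrib_left)
  then show ?thesis
    using assms by (simp add: sum.distrib sum_distrib_right)
qed

text \<open>On one coordinate the kernel matrix acts as \<open>q (q - 1)\<close> on constants and as \<open>q w\<close>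
  on vectors with zero sum; accordingly \<open>f\<close> is split along the last coordinate into its sum
  \<open>g\<close> and the centred parts \<open>h a\<close>.\<close>

lemma kernel_sum_Suc_square:
  fixes f :: "(nat \<Rightarrow> nat) \<Rightarrow> real" and n :: nat
  assumes q: "q > 0"
  defines "g \<equiv> \<lambda>x. \<Sum>a<q. f (x(n := a))"
    and "h \<equiv> \<lambda>a x. f (x(n := a)) - (\<Sum>b<q. f (x(n := b))) / real q"
  shows "kernel_sum q (Suc n) (\<lambda>x y. f x * f y) =
           smult (real q - 1) (kernel_sum q n (\<lambda>x y. g x * g y))
           + (\<Sum>a<q. kernel_sum q n (\<lambda>x y. h a x * h a y)) * [:0, real q:]"
proof -
  define K where "K a b = kernel_sum q n (\<lambda>x y. f (x(n := a)) * f (y(n := b)))" for a b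
  let ?B = "[:real q - 1, -1:]" and ?C = "[:0, real q:]"
  let ?G = "kernel_sum q n (\<lambda>x y. g x * g y)"
  let ?H = "\<Sum>a<q. kernel_sum q n (\<lambda>x y. h a x * h a y)"
  have BC: "[:real q - 1, real q - 1:] = ?B + ?C" by simp
  have "kernel_sum q (Suc n) (\<lambda>x y. f x * f y) = (\<Sum>a<q. \<Sum>b<q. K a b) * ?B + (\<Sum>a<q. K a a) * ?C"
    unfolding kernel_sum_Suc K_def[symmetric] BC by (rule sum_mult_diagonal_split) simp
  also have "(\<Sum>a<q. \<Sum>b<q. K a b) = ?G"
    unfolding K_def g_def by (simp add: kernel_sum_sum sum_product)
  also have "(\<Sum>a<q. K a a) = smult (1 / real q) ?G + ?H"
  proof -
    have "(\<Sum>a<q. f (x(n := a)) * f (y(n := a))) =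
        g x * g y / real q + (\<Sum>a<q. h a x * h a y)" for x y
      using sum_products_centered[OF q, of "\<lambda>a. f (x(n := a))" "\<lambda>a. f (y(n := a))"]
      unfolding g_def h_def by simp
    then show ?thesis
      unfolding K_def kernel_sum_sum by (simp add: kernel_sum_add kernel_sum_smult[symmetric])
  qed
  also have "?G * ?B + (smult (1 / real q) ?G + ?H) * ?C =
      ?G * (?B + smult (1 / real q) ?C) + ?H * ?C"
    by (simp only: distrib_left distrib_right mult_smult_right mult_smult_left add.assoc)
  also have "?B + smult (1 / real q) ?C = [:real q - 1:]"
    using q by simp
  finally show ?thesis
    by simp
qed

lemma kernel_sum_square_coeff_nonneg:
  assumes q: "q > 0"
  shows "0 \<le> coeff (kernel_sum q n (\<lambda>x y. f x * f y)) k"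
proof (induction n arbitrary: f k)
  case 0
  have "kernel_sum q 0 (\<lambda>x y. f x * f y) = [:f (\<lambda>_. 0) * f (\<lambda>_. 0):]"
    by (simp add: kernel_sum_def hamming_kernel_def words_0)
  then show ?case by (simp add: coeff_pCons')
next
  case (Suc n)
  have "real q \<ge> 1" using q by simp
  then show ?case
    unfolding kernel_sum_Suc_square[OF q]
    by (cases k) (simp_all add: Suc.IH coeff_sum sum_nonneg)
qed

text \<open>The functional \<open>z ^ i \<mapsto> Q ^ max i t\<close>. It acts on polynomials in \<open>z = 1 + w\<close>;
  composing with \<open>[:-1, 1:]\<close> converts a polynomial in \<open>w\<close> into one in \<open>z\<close>.\<close>

definition dual_eval :: "real \<Rightarrow> nat \<Rightarrow> real poly \<Rightarrow> real" where
  "dual_eval Q t p = poly p Q + (\<Sum>i<t. coeff p i * (Q ^ t - Q ^ i))"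

lemma dual_eval_sum: "dual_eval Q t (\<Sum>k\<in>A. p k) = (\<Sum>k\<in>A. dual_eval Q t (p k))"
  unfolding dual_eval_def
  by (simp add: poly_sum coeff_sum sum.distrib sum_distrib_right sum.swap[of _ A])

lemma dual_eval_smult: "dual_eval Q t (smult c p) = c * dual_eval Q t p"
  unfolding dual_eval_def by (simp add: sum_distrib_left algebra_simps)

lemma dual_eval_1: "dual_eval Q t 1 = Q ^ t"
  by (cases t) (simp_all add: dual_eval_def sum.lessThan_Suc_shift)

lemma dual_eval_eq_poly: "(\<And>i. i < t \<Longrightarrow> coeff p i = 0) \<Longrightarrow> dual_eval Q t p = poly p Q"
  by (simp add: dual_eval_def)

lemma dual_eval_X_minus_1_mult:
  assumes "0 < t"
  shows "dual_eval Q t ([:-1, 1:] * p) = (Q - 1) * (dual_eval Q t p - Q ^ t * (\<Sum>i<t. coeff p i))"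
proof -
  obtain s where t: "t = Suc s" using assms by (cases t) auto
  have "(\<Sum>i<t. coeff (pCons 0 p) i * (Q ^ t - Q ^ i)) = (\<Sum>i<s. coeff p i * (Q ^ t - Q ^ Suc i))"
    unfolding t by (simp only: sum.lessThan_Suc_shift) simp
  also have "\<dots> = (\<Sum>i<t. coeff p i * (Q ^ t - Q ^ Suc i))"
    unfolding t by simp
  also have "\<dots> = (\<Sum>i<t. Q * (coeff p i * (Q ^ t - Q ^ i)) - (Q - 1) * Q ^ t * coeff p i)"
    by (intro sum.cong refl) (simp add: algebra_simps)
  finally have shift: "(\<Sum>i<t. coeff (pCons 0 p) i * (Q ^ t - Q ^ i)) =
      Q * (\<Sum>i<t. coeff p i * (Q ^ t - Q ^ i)) - (Q - 1) * Q ^ t * (\<Sum>i<t. coeff p i)"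
    by (simp add: sum_subtractf sum_distrib_left)
  have X: "[:-1, 1:] * p = pCons 0 p - p" by simp
  have "dual_eval Q t ([:-1, 1:] * p) = (Q - 1) * poly p Q
      + (\<Sum>i<t. coeff (pCons 0 p) i * (Q ^ t - Q ^ i)) - (\<Sum>i<t. coeff p i * (Q ^ t - Q ^ i))"
    unfolding dual_eval_def X coeff_diff left_diff_distrib sum_subtractf
    by (simp add: algebra_simps)
  then show ?thesis
    unfolding shift dual_eval_def by (simp add: algebra_simps)
qed

lemma sum_coeff_X_minus_1_mult:
  fixes p :: "'a::comm_ring_1 poly"
  assumes "0 < t"
  shows "(\<Sum>i<t. coeff ([:-1, 1:] * p) i) = - coeff p (t - 1)"
proof -
  obtain s where t: "t = Suc s" using assms by (cases t) auto
  have X: "[:-1, 1:] * p = pCons 0 p - p" by simp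
  have "(\<Sum>i<Suc s. coeff (pCons 0 p) i) = (\<Sum>i<s. coeff p i)"
    by (simp only: sum.lessThan_Suc_shift) simp
  then show ?thesis
    unfolding t X coeff_diff sum_subtractf by simp
qed

lemma coeff_X_minus_1_power:
  "coeff ([:-1, 1:] ^ j) s = ((-1) ^ (j + s) * of_nat (j choose s) :: 'a::comm_ring_1)"
proof (cases "s \<le> j")
  case True
  then have "j + s = (j - s) + 2 * s" by simp
  then have "(-1 :: 'a) ^ (j + s) = (-1) ^ (j - s)"
    by (simp only: power_add power_mult) simp
  with True show ?thesis by (simp add: coeff_linear_poly_power)
next
  case False
  have "degree ([:-1, 1:] ^ j :: 'a poly) \<le> j"
    by (rule order_trans[OF degree_power_le]) simp
  with False show ?thesis by (simp add: coeff_eq_0 binomial_eq_0)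
qed

lemma Suc_choose_le: "s \<le> j \<Longrightarrow> Suc j choose s \<le> Suc s * (j choose s)"
proof -
  assume "s \<le> j"
  have "(Suc j - s) * (Suc j choose s) = Suc j * (j choose s)"
    using binomial_absorb_comp[of "Suc j" s] by simp
  also have "\<dots> \<le> Suc s * (Suc j - s) * (j choose s)"
  proof (intro mult_right_mono)
    obtain m where "j = s + m" using \<open>s \<le> j\<close> le_Suc_ex by blast
    then show "Suc j \<le> Suc s * (Suc j - s)" by (simp add: Suc_diff_le)
  qed simp
  also have "\<dots> = (Suc j - s) * (Suc s * (j choose s))"
    by (simp only: mult_ac)
  finally show ?thesis
    using \<open>s \<le> j\<close> by (simp only: mult_le_cancel1)
qed

text \<open>When \<open>j + s\<close> is odd the next step of the recurrence subtracts \<open>c * (j choose s)\<close>,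
  so the invariant has to carry that much slack.\<close>

lemma alternating_binomial_recurrence_nonneg:
  fixes mu :: "nat \<Rightarrow> real"
  assumes mu_1: "mu (Suc 0) = 0"
    and mu_rec: "\<And>j. mu (Suc (Suc j)) = r * (mu (Suc j) + c * (-1) ^ (j + s) * real (j choose s))"
    and r: "real s + 1 \<le> r" and c: "0 \<le> c"
  shows "0 \<le> mu (Suc j) \<and> (odd (j + s) \<longrightarrow> c * real (j choose s) \<le> mu (Suc j))"
proof (induction j)
  case 0
  then show ?case by (cases s) (simp_all add: mu_1)
next
  case (Suc j)
  have "r \<ge> 0" using r by linarith
  show ?case
  proof (cases "even (j + s)")
    case True
    have "real (Suc j choose s) \<le> r * real (j choose s)"
    proof (cases "s \<le> j")
      case True
      then have "real (Suc j choose s) \<le> real (Suc s) * real (j choose s)"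
        unfolding of_nat_mult[symmetric] of_nat_le_iff by (rule Suc_choose_le)
      also have "\<dots> \<le> r * real (j choose s)"
        using r by (intro mult_right_mono) simp_all
      finally show ?thesis .
    next
      case False
      with \<open>even (j + s)\<close> have "Suc j < s" by presburger
      then show ?thesis by (simp add: binomial_eq_0)
    qed
    then have "c * real (Suc j choose s) \<le> c * (r * real (j choose s))"
      using c by (intro mult_left_mono)
    moreover have "c * (r * real (j choose s)) \<le> mu (Suc (Suc j))"
      using Suc.IH True mult_nonneg_nonneg[OF \<open>r \<ge> 0\<close>, of "mu (Suc j)"]
      by (simp add: mu_rec algebra_simps)
    moreover have "0 \<le> c * (r * real (j choose s))"
      using \<open>r \<ge> 0\<close> c by simp
    ultimately show ?thesis by linarith
  next
    case False
    then show ?thesis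
      using Suc.IH \<open>r \<ge> 0\<close> by (simp add: mu_rec)
  qed
qed

lemma dual_eval_X_minus_1_power_nonneg:
  assumes t: "0 < t" and Q: "real t + 1 \<le> Q"
  shows "0 \<le> dual_eval Q t ([:-1, 1:] ^ k)"
proof -
  obtain s where s: "t = Suc s" using t by (cases t) auto
  define mu where "mu k = dual_eval Q t ([:-1, 1:] ^ k)" for k
  have mu_Suc: "mu (Suc k) = (Q - 1) * (mu k - Q ^ t * (\<Sum>i<t. coeff ([:-1, 1:] ^ k) i))" for k
    unfolding mu_def power_Suc by (rule dual_eval_X_minus_1_mult[OF t])
  have "(\<Sum>i<t. coeff (1 :: real poly) i) = 1"
    using t by (simp add: coeff_1)
  then have "mu (Suc 0) = 0"
    using mu_Suc[of 0] by (simp add: mu_def dual_eval_1)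
  moreover have "(\<Sum>i<t. coeff ([:-1, 1:] ^ Suc j) i) = - ((-1) ^ (j + s) * real (j choose s))" for j
    unfolding power_Suc sum_coeff_X_minus_1_mult[OF t] by (simp add: s coeff_X_minus_1_power)
  then have "mu (Suc (Suc j)) = (Q - 1) * (mu (Suc j) + Q ^ t * (-1) ^ (j + s) * real (j choose s))"
    for j
    using mu_Suc[of "Suc j"] by simp
  ultimately have "0 \<le> mu (Suc j)" for j
    using alternating_binomial_recurrence_nonneg[of mu "Q - 1" "Q ^ t" s] Q s by simp
  moreover have "0 \<le> mu 0"
    using Q by (simp add: mu_def dual_eval_1)
  ultimately show ?thesis
    unfolding mu_def[symmetric] by (cases k) auto
qed

lemma pcompose_eq_sum_powers:
  fixes p :: "'a::comm_ring_1 poly"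
  shows "pcompose p r = (\<Sum>k\<le>degree p. smult (coeff p k) (r ^ k))"
proof -
  have "degree (map_poly (\<lambda>c. [:c:]) p) = degree p"
    by (rule degree_map_poly) simp
  then show ?thesis
    unfolding pcompose_altdef poly_altdef by (simp add: coeff_map_poly)
qed

lemma dual_eval_pcompose_ge:
  assumes "\<And>k. 0 \<le> coeff p k" "0 < t" "real t + 1 \<le> Q"
  shows "Q ^ t * coeff p 0 \<le> dual_eval Q t (pcompose p [:-1, 1:])"
proof -
  have "dual_eval Q t (pcompose p [:-1, 1:]) =
      (\<Sum>k\<le>degree p. coeff p k * dual_eval Q t ([:-1, 1:] ^ k))"
    by (simp add: pcompose_eq_sum_powers dual_eval_sum dual_eval_smult)
  moreover have "coeff p 0 * dual_eval Q t ([:-1, 1:] ^ 0) \<le> \<dots>"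
    using assms dual_eval_X_minus_1_power_nonneg by (intro member_le_sum) auto
  ultimately show ?thesis
    by (simp add: dual_eval_1 mult.commute)
qed

lemma dual_eval_pcompose_multiple:
  assumes "[:1, 1:] ^ t dvd p"
  shows "dual_eval Q t (pcompose p [:-1, 1:]) = poly p (Q - 1)"
proof -
  obtain r where p: "p = [:1, 1:] ^ t * r" using assms by blast
  have "pcompose ([:1, 1:] ^ k) [:-1, 1:] = (pcompose [:1, 1:] [:-1, 1:] :: real poly) ^ k" for k
    by (induction k) (simp_all only: power_0 power_Suc pcompose_1 pcompose_mult)
  moreover have "pcompose [:1, 1:] [:-1, 1:] = ([:0, 1:] :: real poly)"
    by (simp add: pcompose_pCons)
  ultimately have "pcompose ([:1, 1:] ^ t) [:-1, 1:] = (monom 1 t :: real poly)"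
    by (simp add: monom_altdef)
  then have "pcompose p [:-1, 1:] = monom 1 t * pcompose r [:-1, 1:]"
    by (simp add: p pcompose_mult)
  then have "dual_eval Q t (pcompose p [:-1, 1:]) = poly (pcompose p [:-1, 1:]) Q"
    by (intro dual_eval_eq_poly) (simp add: coeff_monom_mult)
  then show ?thesis
    by (simp add: poly_pcompose)
qed

theorem intersecting_words_card_le:
  assumes F: "F \<subseteq> words q n" and t: "0 < t" "t < q"
    and agree: "\<forall>x\<in>F. \<forall>y\<in>F. t + hdist n x y \<le> n"
  shows "card F * q ^ t \<le> q ^ n"
proof -
  define P where "P = kernel_sum q n (\<lambda>x y. (if x \<in> F then 1 else 0) * (if y \<in> F then 1 else 0))"
  define Q where "Q = real q"
  define N where "N = real (card F)"
  have P_F: "P = (\<Sum>x\<in>F. \<Sum>y\<in>F. hamming_kernel q n x y)"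
    unfolding P_def by (rule kernel_sum_indicator[OF F])
  have finF: "finite F" by (rule finite_subset[OF F finite_words])
  have "coeff P 0 = (Q - 1) ^ n * N ^ 2"
    by (simp add: P_F poly_0_coeff_0[symmetric] poly_sum poly_hamming_kernel_0 Q_def N_def
        power2_eq_square)
  moreover have "Q ^ t * coeff P 0 \<le> dual_eval Q t (pcompose P [:-1, 1:])"
    using t unfolding P_def Q_def
    by (intro dual_eval_pcompose_ge kernel_sum_square_coeff_nonneg) simp_all
  ultimately have "Q ^ t * ((Q - 1) ^ n * N ^ 2) \<le> dual_eval Q t (pcompose P [:-1, 1:])"
    by simp
  also have "\<dots> = poly P (Q - 1)"
    unfolding P_F using agree hamming_kernel_dvd
    by (intro dual_eval_pcompose_multiple dvd_sum) blast
  also have "\<dots> = (Q * (Q - 1)) ^ n * N"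
    using F finF
    by (simp add: P_F poly_sum poly_hamming_kernel_q_minus_1 subsetD Q_def N_def cong: sum.cong)
  finally have ineq: "((Q - 1) ^ n * N) * (N * Q ^ t) \<le> ((Q - 1) ^ n * N) * Q ^ n"
    by (simp add: power_mult_distrib power2_eq_square mult_ac)
  show ?thesis
  proof (cases "card F = 0")
    case False
    then have "(Q - 1) ^ n * N > 0" using t by (simp add: Q_def N_def)
    with ineq have "N * Q ^ t \<le> Q ^ n" by (simp only: mult_le_cancel_left_pos)
    then show ?thesis
      unfolding N_def Q_def by (simp flip: of_nat_power of_nat_mult)
  qed simp
qed

lemma card_eq_sum_color_classes:
  assumes "proper_coloring V adj k c" "finite V"
  shows "card V = (\<Sum>j<k. card {v\<in>V. c v = j})"
proof -
  have "V = (\<Union>j<k. {v\<in>V. c v = j})"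
    using assms(1) unfolding proper_coloring_def by auto
  moreover have "card (\<Union>j<k. {v\<in>V. c v = j}) = (\<Sum>j<k. card {v\<in>V. c v = j})"
    using assms(2) by (intro card_UN_disjoint) auto
  ultimately show ?thesis by simp
qed

lemma chromatic_number_eq_if_tight_independence_bound:
  assumes V: "finite V"
    and colorable: "\<exists>c. proper_coloring V adj K c"
    and independent: "\<And>S. S \<subseteq> V \<Longrightarrow> \<forall>u\<in>S. \<forall>v\<in>S. \<not> adj u v \<Longrightarrow> card S \<le> M"
    and card_V: "card V = K * M" and M: "0 < M"
  shows "chromatic_number V adj = K"
    and "proper_coloring V adj K c \<Longrightarrow> even_coloring V c"
proof -
  have class_le: "card {v\<in>V. c v = j} \<le> M" if "proper_coloring V adj k c" for k c j
    using that unfolding proper_coloring_def by (intro independent) blast+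
  have "K \<le> k" if c: "proper_coloring V adj k c" for k c
  proof -
    have "K * M \<le> k * M"
      unfolding card_V[symmetric] card_eq_sum_color_classes[OF c V]
      using sum_bounded_above[of "{..<k}", OF class_le[OF c]] by simp
    with M show ?thesis by simp
  qed
  then show "chromatic_number V adj = K"
    unfolding chromatic_number_def using colorable by (intro Least_equality) auto
  assume c: "proper_coloring V adj K c"
  have "card {v\<in>V. c v = j} = M" if "j < K" for j
  proof (rule ccontr)
    assume "card {v\<in>V. c v = j} \<noteq> M"
    with class_le[OF c] have "\<exists>i\<in>{..<K}. card {v\<in>V. c v = i} < M"
      using that by (metis le_neq_implies_less lessThan_iff)
    then have "(\<Sum>i<K. card {v\<in>V. c v = i}) < (\<Sum>i<K. M)"
      using class_le[OF c] by (intro sum_strict_mono_ex1) auto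
    then show False
      using card_eq_sum_color_classes[OF c V] card_V by simp
  qed
  moreover have "c v < K" if "v \<in> V" for v
    using c that by (simp add: proper_coloring_def)
  ultimately show "even_coloring V c"
    unfolding even_coloring_def by simp
qed

lemma hdist_less_if_not_H_adj:
  assumes "x \<in> words q n" "y \<in> words q n" "\<not> H_adj q n d x y"
  shows "hdist n x y < d \<or> x = y"
  using assms by (auto simp: H_adj_def)

lemma H_adj_independent_card_le:
  assumes "0 < d" "d \<le> n" "n - d + 1 < q"
    and S: "S \<subseteq> words q n" and indep: "\<forall>u\<in>S. \<forall>v\<in>S. \<not> H_adj q n d u v"
  shows "card S \<le> q ^ (d - 1)"
proof -
  have "\<forall>x\<in>S. \<forall>y\<in>S. (n - d + 1) + hdist n x y \<le> n"
    using assms hdist_less_if_not_H_adj by fastforce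
  then have "card S * q ^ (n - d + 1) \<le> q ^ n"
    using assms by (intro intersecting_words_card_le) auto
  also have "(d - 1) + (n - d + 1) = n"
    using assms by simp
  then have "q ^ n = q ^ (d - 1) * q ^ (n - d + 1)"
    by (metis power_add)
  finally show ?thesis
    using assms by (simp only: mult_le_cancel2) simp
qed

lemma hdist_binary:
  assumes "x \<in> words 2 n" "y \<in> words 2 n"
  shows "hdist n x y + 2 * (\<Sum>i<n. x i * y i) = (\<Sum>i<n. x i) + (\<Sum>i<n. y i)"
proof -
  have "hdist n x y = (\<Sum>i<n. if x i \<noteq> y i then 1 else 0)"
    unfolding hdist_def by (simp add: sum.If_cases Int_def)
  moreover have "(if x i \<noteq> y i then 1 else 0) + 2 * (x i * y i) = x i + y i" if "i < n" for i
  proof -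
    have "x i < 2" "y i < 2" using assms that by (auto simp: words_def)
    then show ?thesis by (auto simp: less_2_cases_iff)
  qed
  ultimately show ?thesis
    by (simp add: sum_distrib_left sum.distrib[symmetric])
qed

lemma even_hdist_binary:
  assumes "x \<in> words 2 n" "y \<in> words 2 n"
  shows "even (hdist n x y) \<longleftrightarrow> (even (\<Sum>i<n. x i) \<longleftrightarrow> even (\<Sum>i<n. y i))"
proof -
  have "even (hdist n x y + 2 * (\<Sum>i<n. x i * y i)) \<longleftrightarrow> even ((\<Sum>i<n. x i) + (\<Sum>i<n. y i))"
    by (simp only: hdist_binary[OF assms])
  then show ?thesis by simp
qed

lemma binary_H_adj_independent_card_le:
  assumes S: "S \<subseteq> words 2 n" and indep: "\<forall>u\<in>S. \<forall>v\<in>S. \<not> H_adj 2 n 2 u v"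
  shows "card S \<le> 2"
proof (rule ccontr)
  assume "\<not> card S \<le> 2"
  then have "3 \<le> card S" by simp
  then obtain T where "T \<subseteq> S" "card T = 3"
    by (rule obtain_subset_with_card_n)
  then obtain x y z where T: "T = {x, y, z}" "x \<noteq> y" "y \<noteq> z" "x \<noteq> z"
    by (auto simp: card_3_iff)
  have one: "hdist n u v = 1" if "u \<in> T" "v \<in> T" "u \<noteq> v" for u v
  proof -
    have uv: "u \<in> words 2 n" "v \<in> words 2 n" using that \<open>T \<subseteq> S\<close> S by auto
    have "hdist n u v < 2"
      using hdist_less_if_not_H_adj[OF uv] indep that \<open>T \<subseteq> S\<close> by auto
    moreover have "hdist n u v \<noteq> 0"
      using \<open>u \<noteq> v\<close> words_eqI[OF uv] by (auto simp: hdist_def)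
    ultimately show ?thesis by simp
  qed
  have w: "x \<in> words 2 n" "y \<in> words 2 n" "z \<in> words 2 n"
    using T \<open>T \<subseteq> S\<close> S by auto
  show False
    using even_hdist_binary[OF w(1,2)] even_hdist_binary[OF w(2,3)] even_hdist_binary[OF w(1,3)]
      one T by auto
qed

lemma H_adj_prefix_coloring:
  assumes "0 < d" "d \<le> n"
  shows "\<exists>c. proper_coloring (words q n) (H_adj q n d) (q ^ (n - d + 1)) c"
proof -
  define t where "t = n - d + 1"
  define prefix where "prefix x = (\<lambda>i. if i < t then x i else 0)" for x :: "nat \<Rightarrow> nat"
  obtain h where h: "bij_betw h (words q t) {0..<q ^ t}"
    using ex_bij_betw_finite_nat[OF finite_words[of q t]] by (auto simp: card_words)
  have prefix_words: "prefix x \<in> words q t" if "x \<in> words q n" for x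
    using that assms by (auto simp: words_def prefix_def t_def)
  have "hdist n u v < d" if "u \<in> words q n" "v \<in> words q n" "h (prefix u) = h (prefix v)" for u v
  proof -
    have "prefix u = prefix v"
      using that h prefix_words by (auto dest: bij_betw_imp_inj_on inj_onD)
    then have "{i. i < n \<and> u i \<noteq> v i} \<subseteq> {t..<n}"
      by (auto simp: prefix_def fun_eq_iff) (metis not_le)
    then have "hdist n u v \<le> n - t"
      unfolding hdist_def by (metis card_atLeastLessThan card_mono finite_atLeastLessThan)
    then show ?thesis using assms by (simp add: t_def)
  qed
  moreover have "h (prefix x) < q ^ t" if "x \<in> words q n" for x
    using bij_betw_apply[OF h prefix_words[OF that]] by simp
  ultimately have "proper_coloring (words q n) (H_adj q n d) (q ^ t) (h \<circ> prefix)"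
    unfolding proper_coloring_def H_adj_def by (auto simp: not_less[symmetric])
  then show ?thesis unfolding t_def by blast
qed

theorem corollary3p5:
  shows "(\<forall>n::nat. n \<ge> 2 \<longrightarrow>
            chromatic_number (words 2 n) (H_adj 2 n 2) = 2 ^ (n - 1)) \<and>
         (\<forall>q n d :: nat. q \<ge> 3 \<longrightarrow> n \<ge> 2 \<longrightarrow> d > 0 \<longrightarrow>
            int d \<ge> int n - int q + 2 \<longrightarrow> d \<le> n \<longrightarrow>
            chromatic_number (words q n) (H_adj q n d) = q ^ (n - d + 1) \<and>
            (\<forall>c. proper_coloring (words q n) (H_adj q n d) (q ^ (n - d + 1)) c \<longrightarrow>
                 even_coloring (words q n) c))"
proof (intro conjI allI impI)
  fix n :: nat assume n: "n \<ge> 2"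
  have "card (words 2 n) = 2 ^ (n - 1) * 2"
    using n by (simp add: card_words power_Suc2[symmetric])
  moreover have "n - 2 + 1 = n - 1" using n by simp
  then have "\<exists>c. proper_coloring (words 2 n) (H_adj 2 n 2) (2 ^ (n - 1)) c"
    using H_adj_prefix_coloring[of 2 n 2] n by simp
  ultimately show "chromatic_number (words 2 n) (H_adj 2 n 2) = 2 ^ (n - 1)"
    using chromatic_number_eq_if_tight_independence_bound(1)[OF finite_words _
        binary_H_adj_independent_card_le]
    by simp
next
  fix q n d :: nat
  assume "q \<ge> 3" "n \<ge> 2" "d > 0" "int d \<ge> int n - int q + 2" "d \<le> n"
  then have d: "0 < d" "d \<le> n" and t: "n - d + 1 < q" and "(n - d + 1) + (d - 1) = n"
    by auto
  then have card: "card (words q n) = q ^ (n - d + 1) * q ^ (d - 1)"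
    by (metis card_words power_add)
  note tight = chromatic_number_eq_if_tight_independence_bound[OF finite_words
      H_adj_prefix_coloring[OF d] H_adj_independent_card_le[OF d t] card]
  show "chromatic_number (words q n) (H_adj q n d) = q ^ (n - d + 1)"
    using tight(1) \<open>q \<ge> 3\<close> by simp
  fix c assume "proper_coloring (words q n) (H_adj q n d) (q ^ (n - d + 1)) c"
  then show "even_coloring (words q n) c"
    using tight(2) \<open>q \<ge> 3\<close> by simp
qed

end
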